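(* Let $m,n\ge 1$, $1\le r\le mn$, let $\mathcal{B}=\mathcal{B}(m,n;r)$ and let $G$ be the symmetry group acting on $\mathcal{B}$. Fix a division of the cells of the $m\times n$ grid into labelled regions such that every element of $G$ maps each region onto a region, and let board partitions be taken with respect to this division. Suppose a subset $\overline{\mathcal{B}}\subseteq\mathcal{B}$ satisfies: (1) $\overline{\mathcal{B}}$ is a disjoint union of sets $\pi_1,\dots,\pi_t$, where each $\pi_i$ is the set of all boards in $\mathcal{B}$ having some fixed board partition; (2) every board $B\in\mathcal{B}$ is equivalent under $G$ to some $B'\in\overline{\mathcal{B}}$; (3) if $B,B'\in\overline{\mathcal{B}}$ are equivalent under $G$, then they have the same board partition (and hence both lie in the same $\pi_i$). For each $1\le i\le t$ let $K_i=\{g\in G: g\cdot\pi_i=\pi_i\}$ be the subgroup of symmetries preserving the set $\pi_i$. Then \[|\mathcal{B}(m,n;r)|=\sum_{i=1}^t|\pi_i|\cdot[G:K_i].\]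
   Context: Consider a rectangular grid with $m$ rows and $n$ columns of unit square cells. For $1\le r\le mn$, $\mathcal{B}(m,n;r)$ is the set of all ways to choose exactly $r$ of the $mn$ cells to be "blocked"; each such choice is called a board (so $|\mathcal{B}(m,n;r)|=\binom{mn}{r}$). Symmetries of the rectangle permute the cells and hence act on boards. The symmetry group $G$ is: the dihedral group $D_4$ of order 8 (rotations by $0,90,180,270$ degrees and reflections across the horizontal midline, vertical midline and both diagonals) if $m=n>1$; the group $\langle H,V\rangle=\{R_0,H,V,R_{180}\}$ (identity, reflections across the horizontal and vertical midlines, rotation by 180 degrees) if $m\ne n$ and $m,n>1$; and $\langle R_{180}\rangle$ if exactly one of $m,n$ equals 1. Two boards $B,B'$ are equivalent under $G$ if $g\cdot B=B'$ for some $g\in G$. Given a division of the grid into labelled disjoint regions, the board partition of a board is the ordered tuple giving the number of blocked cells of the board lying in each region. *)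

theory Defs
  imports Main
begin

type_synonym cell = "nat \<times> nat"

definition cells :: "nat \<Rightarrow> nat \<Rightarrow> cell set" where
  "cells m n = {0..<m} \<times> {0..<n}"

text \<open>Boards: sets of exactly r blocked cells.\<close>
definition boards :: "nat \<Rightarrow> nat \<Rightarrow> nat \<Rightarrow> cell set set" where
  "boards m n r = {B. B \<subseteq> cells m n \<and> card B = r}"

text \<open>A map on cells, restricted to the grid (identity outside), so group
  elements are permutations of the grid's cells.\<close>
definition on_grid :: "nat \<Rightarrow> nat \<Rightarrow> (cell \<Rightarrow> cell) \<Rightarrow> cell \<Rightarrow> cell" where
  "on_grid m n f = (\<lambda>c. if c \<in> cells m n then f c else c)"

definition symR0 :: "nat \<Rightarrow> nat \<Rightarrow> cell \<Rightarrow> cell" where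
  "symR0 m n = on_grid m n (\<lambda>(i,j). (i,j))"
definition symH :: "nat \<Rightarrow> nat \<Rightarrow> cell \<Rightarrow> cell" where
  "symH m n = on_grid m n (\<lambda>(i,j). (m - 1 - i, j))"
definition symV :: "nat \<Rightarrow> nat \<Rightarrow> cell \<Rightarrow> cell" where
  "symV m n = on_grid m n (\<lambda>(i,j). (i, n - 1 - j))"
definition symR180 :: "nat \<Rightarrow> nat \<Rightarrow> cell \<Rightarrow> cell" where
  "symR180 m n = on_grid m n (\<lambda>(i,j). (m - 1 - i, n - 1 - j))"
text \<open>Square case only (m = n).\<close>
definition symR90 :: "nat \<Rightarrow> nat \<Rightarrow> cell \<Rightarrow> cell" where
  "symR90 m n = on_grid m n (\<lambda>(i,j). (j, n - 1 - i))"
definition symR270 :: "nat \<Rightarrow> nat \<Rightarrow> cell \<Rightarrow> cell" where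
  "symR270 m n = on_grid m n (\<lambda>(i,j). (n - 1 - j, i))"
definition symD :: "nat \<Rightarrow> nat \<Rightarrow> cell \<Rightarrow> cell" where
  "symD m n = on_grid m n (\<lambda>(i,j). (j, i))"
definition symD' :: "nat \<Rightarrow> nat \<Rightarrow> cell \<Rightarrow> cell" where
  "symD' m n = on_grid m n (\<lambda>(i,j). (n - 1 - j, m - 1 - i))"

text \<open>For m = n = 1 (not covered by the paper's case split) we use
  the group generated by R180, which acts trivially.\<close>
definition symgroup :: "nat \<Rightarrow> nat \<Rightarrow> (cell \<Rightarrow> cell) set" where
  "symgroup m n =
     (if m = n \<and> m > 1 then
        {symR0 m n, symR90 m n, symR180 m n, symR270 m n,
         symH m n, symV m n, symD m n, symD' m n}
      else if m > 1 \<and> n > 1 then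
        {symR0 m n, symH m n, symV m n, symR180 m n}
      else {symR0 m n, symR180 m n})"

definition act :: "(cell \<Rightarrow> cell) \<Rightarrow> cell set \<Rightarrow> cell set" where
  "act g B = g ` B"

definition equivalent :: "nat \<Rightarrow> nat \<Rightarrow> cell set \<Rightarrow> cell set \<Rightarrow> bool" where
  "equivalent m n B B' \<longleftrightarrow> (\<exists>g\<in>symgroup m n. act g B = B')"

text \<open>Division into labelled regions: region c is the label of cell c.
  The region with label l is the set of cells of the grid carrying label l.\<close>
definition region_cells :: "nat \<Rightarrow> nat \<Rightarrow> (cell \<Rightarrow> 'l) \<Rightarrow> 'l \<Rightarrow> cell set" where
  "region_cells m n region l = {c \<in> cells m n. region c = l}"

definition board_partition :: "(cell \<Rightarrow> 'l) \<Rightarrow> cell set \<Rightarrow> 'l \<Rightarrow> nat" where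
  "board_partition region B = (\<lambda>l. card {c \<in> B. region c = l})"

definition boards_with_partition ::
    "nat \<Rightarrow> nat \<Rightarrow> nat \<Rightarrow> (cell \<Rightarrow> 'l) \<Rightarrow> ('l \<Rightarrow> nat) \<Rightarrow> cell set set" where
  "boards_with_partition m n r region p =
     {B \<in> boards m n r. board_partition region B = p}"

definition set_stabilizer :: "nat \<Rightarrow> nat \<Rightarrow> cell set set \<Rightarrow> (cell \<Rightarrow> cell) set" where
  "set_stabilizer m n P = {g \<in> symgroup m n. act g ` P = P}"

end

theory Submission
  imports Defs "HOL-Algebra.Group_Action"
begin

(* The symmetries permute the regions, so two boards with the same board partition are mapped
   to two boards with the same board partition: the classes of boards with a fixed board
   partition form a block system for the action of G.  Hence the translates g pi_i are pairwise
   equal or disjoint and have |pi_i| elements each, and by the orbit-stabiliser theorem there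
   are [G : K_i] different ones.  Conditions (2) and (3) say exactly that the unions of the
   translates of pi_1, ..., pi_t partition the set of all boards. *)

definition comp_monoid :: "('a \<Rightarrow> 'a) set \<Rightarrow> ('a \<Rightarrow> 'a) monoid" where
  "comp_monoid G = \<lparr>carrier = G, mult = (\<circ>), one = id\<rparr>"

lemma carrier_comp_monoid [simp]: "carrier (comp_monoid G) = G"
  by (simp add: comp_monoid_def)

lemma group_comp_monoidI:
  assumes "id \<in> G" and "\<And>g h. g \<in> G \<Longrightarrow> h \<in> G \<Longrightarrow> g \<circ> h \<in> G"
    and "\<And>g. g \<in> G \<Longrightarrow> \<exists>h\<in>G. h \<circ> g = id"
  shows "group (comp_monoid G)"
  by (rule groupI) (use assms in \<open>auto simp: comp_monoid_def comp_assoc\<close>)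

lemma group_comp_monoid_inj:
  assumes "group (comp_monoid G)" and "g \<in> G"
  shows "inj g"
proof -
  interpret group "comp_monoid G" by (rule assms(1))
  have "inv\<^bsub>comp_monoid G\<^esub> g \<circ> g = id"
    using l_inv[of g] assms(2) by (simp add: comp_monoid_def)
  then show ?thesis by (metis inj_on_id inj_on_imageI2)
qed

lemma group_action_image_action:
  assumes grp: "group (comp_monoid G)" and closed: "\<And>g B. g \<in> G \<Longrightarrow> B \<in> X \<Longrightarrow> g ` B \<in> X"
  shows "group_action (comp_monoid G) X (\<lambda>g. \<lambda>B\<in>X. g ` B)"
proof -
  interpret group "comp_monoid G" by (rule grp)
  have bij: "bij_betw ((`) g) X X" if g: "g \<in> G" for g
  proof (rule bij_betw_imageI)
    show "inj_on ((`) g) X"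
      using group_comp_monoid_inj[OF grp g] by (simp add: inj_on_def inj_image_eq_iff)
    obtain h where h: "h \<in> G" "g \<circ> h = id"
      using r_inv[of g] inv_closed[of g] g by (auto simp: comp_monoid_def)
    have "B \<in> (`) g ` X" if "B \<in> X" for B
      using image_eqI[OF _ closed[OF h(1) that], of B "(`) g"] h(2) by (simp add: image_comp)
    then show "(`) g ` X = X"
      using closed g by blast
  qed
  show ?thesis
    unfolding group_action_def group_hom_def group_hom_axioms_def
  proof (intro conjI grp group_BijGroup homI)
    show "(\<lambda>B\<in>X. g ` B) \<in> carrier (BijGroup X)" if "g \<in> carrier (comp_monoid G)" for g
      using bij that by (simp add: BijGroup_def Bij_def)
    fix g h assume "g \<in> carrier (comp_monoid G)" "h \<in> carrier (comp_monoid G)"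
    then have "g \<in> G" "h \<in> G" by simp_all
    have "(\<lambda>B\<in>X. g ` B) \<otimes>\<^bsub>BijGroup X\<^esub> (\<lambda>B\<in>X. h ` B) =
        compose X (\<lambda>B\<in>X. g ` B) (\<lambda>B\<in>X. h ` B)"
      using bij \<open>g \<in> G\<close> \<open>h \<in> G\<close> by (simp add: BijGroup_def Bij_def)
    also have "\<dots> = (\<lambda>B\<in>X. (g \<circ> h) ` B)"
      unfolding compose_def using closed \<open>h \<in> G\<close> by (intro restrict_ext) (simp add: image_comp)
    finally show "(\<lambda>B\<in>X. (g \<otimes>\<^bsub>comp_monoid G\<^esub> h) ` B) =
        (\<lambda>B\<in>X. g ` B) \<otimes>\<^bsub>BijGroup X\<^esub> (\<lambda>B\<in>X. h ` B)"
      by (simp add: comp_monoid_def)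
  qed
qed

(* Elements of BijGroup must be extensional, hence the restriction to Pow E. *)
definition induced_set_action :: "('g \<Rightarrow> 'b \<Rightarrow> 'b) \<Rightarrow> 'b set \<Rightarrow> 'g \<Rightarrow> 'b set \<Rightarrow> 'b set" where
  "induced_set_action \<phi> E g = (\<lambda>U\<in>Pow E. \<phi> g ` U)"

lemma (in group_action) group_action_induced_set_action:
  "group_action G (Pow E) (induced_set_action \<phi> E)"
proof -
  have grp: "group G"
    using group_hom by (simp add: group_hom_def)
  have bij: "bij_betw ((`) (\<phi> g)) (Pow E) (Pow E)" if "g \<in> carrier G" for g
    using bij_prop0[OF that] by (intro bij_betw_Pow) (simp add: Bij_def)
  show ?thesis
    unfolding group_action_def group_hom_def group_hom_axioms_def
  proof (intro conjI grp group_BijGroup homI)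
    show "induced_set_action \<phi> E g \<in> carrier (BijGroup (Pow E))" if "g \<in> carrier G" for g
      using bij[OF that] by (simp add: BijGroup_def Bij_def induced_set_action_def)
    show "induced_set_action \<phi> E (g \<otimes> h) =
        induced_set_action \<phi> E g \<otimes>\<^bsub>BijGroup (Pow E)\<^esub> induced_set_action \<phi> E h"
      if "g \<in> carrier G" "h \<in> carrier G" for g h
    proof -
      have "induced_set_action \<phi> E g \<otimes>\<^bsub>BijGroup (Pow E)\<^esub> induced_set_action \<phi> E h =
          compose (Pow E) (induced_set_action \<phi> E g) (induced_set_action \<phi> E h)"
        using bij that by (simp add: BijGroup_def Bij_def induced_set_action_def)
      also have "\<dots> = induced_set_action \<phi> E (g \<otimes> h)"
        unfolding induced_set_action_def compose_def
      proof (intro restrict_ext)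
        fix U assume "U \<in> Pow E"
        then have "\<phi> h ` U \<subseteq> E"
          using surj_prop[OF \<open>h \<in> carrier G\<close>] by blast
        moreover have "\<phi> (g \<otimes> h) ` U = \<phi> g ` \<phi> h ` U"
          using composition_rule that \<open>U \<in> Pow E\<close> by (force simp: image_image)
        ultimately show "restrict ((`) (\<phi> g)) (Pow E) (restrict ((`) (\<phi> h)) (Pow E) U) =
            \<phi> (g \<otimes> h) ` U"
          using \<open>U \<in> Pow E\<close> by simp
      qed
      finally show ?thesis ..
    qed
  qed
qed

lemma induced_set_action_apply [simp]: "U \<subseteq> E \<Longrightarrow> induced_set_action \<phi> E g U = \<phi> g ` U"
  by (simp add: induced_set_action_def)

lemma orbit_induced_set_action:
  "U \<subseteq> E \<Longrightarrow> orbit G (induced_set_action \<phi> E) U = {\<phi> g ` U | g. g \<in> carrier G}"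
  by (simp add: orbit_def)

lemma (in group_action) eq_Union_translates:
  assumes "\<And>i. i \<in> I \<Longrightarrow> P i \<subseteq> E"
    and "\<forall>x\<in>E. \<exists>y\<in>(\<Union>i\<in>I. P i). y \<in> orbit G \<phi> x"
  shows "E = (\<Union>i\<in>I. \<Union>g\<in>carrier G. \<phi> g ` P i)"
proof
  show "E \<subseteq> (\<Union>i\<in>I. \<Union>g\<in>carrier G. \<phi> g ` P i)"
  proof
    fix x assume "x \<in> E"
    then obtain i y where "i \<in> I" "y \<in> P i" "y \<in> orbit G \<phi> x"
      using assms(2) by blast
    moreover have "y \<in> E"
      using assms(1) \<open>i \<in> I\<close> \<open>y \<in> P i\<close> by blast
    ultimately obtain g where "g \<in> carrier G" "x = \<phi> g y"
      using orbit_sym[OF \<open>x \<in> E\<close>] by (auto simp: orbit_def)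
    then show "x \<in> (\<Union>i\<in>I. \<Union>g\<in>carrier G. \<phi> g ` P i)"
      using \<open>i \<in> I\<close> \<open>y \<in> P i\<close> by blast
  qed
  show "(\<Union>i\<in>I. \<Union>g\<in>carrier G. \<phi> g ` P i) \<subseteq> E"
    using assms(1) element_image by blast
qed

lemma (in group_action) disjoint_Union_translates:
  assumes "P \<subseteq> E" and "Q \<subseteq> E" and "\<And>x y. x \<in> P \<Longrightarrow> y \<in> Q \<Longrightarrow> y \<notin> orbit G \<phi> x"
  shows "(\<Union>g\<in>carrier G. \<phi> g ` P) \<inter> (\<Union>h\<in>carrier G. \<phi> h ` Q) = {}"
proof (rule ccontr)
  assume "(\<Union>g\<in>carrier G. \<phi> g ` P) \<inter> (\<Union>h\<in>carrier G. \<phi> h ` Q) \<noteq> {}"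
  then obtain g h x y where gh: "g \<in> carrier G" "h \<in> carrier G"
    and xy: "x \<in> P" "y \<in> Q" "\<phi> g x = \<phi> h y"
    by blast
  have "x \<in> E" "y \<in> E"
    using xy assms(1,2) by blast+
  moreover have "\<phi> g x \<in> orbit G \<phi> x" "\<phi> g x \<in> orbit G \<phi> y"
    unfolding orbit_def using gh xy(3) by blast+
  moreover have "\<phi> g x \<in> E"
    using element_image gh(1) \<open>x \<in> E\<close> by blast
  ultimately have "y \<in> orbit G \<phi> x"
    using orbit_sym orbit_trans by blast
  then show False
    using assms(3) xy by blast
qed

locale fibred_action = group_action +
  fixes f :: "'b \<Rightarrow> 'c"
  assumes fibres_respected:
    "\<lbrakk>g \<in> carrier G; x \<in> E; y \<in> E; f x = f y\<rbrakk> \<Longrightarrow> f (\<phi> g x) = f (\<phi> g y)"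
begin

lemma image_fibre:
  assumes g: "g \<in> carrier G" and x0: "x0 \<in> E"
  shows "\<phi> g ` {x \<in> E. f x = f x0} = {y \<in> E. f y = f (\<phi> g x0)}"
proof
  show "\<phi> g ` {x \<in> E. f x = f x0} \<subseteq> {y \<in> E. f y = f (\<phi> g x0)}"
    using element_image fibres_respected g x0 by blast
  show "{y \<in> E. f y = f (\<phi> g x0)} \<subseteq> \<phi> g ` {x \<in> E. f x = f x0}"
  proof
    fix y assume y: "y \<in> {y \<in> E. f y = f (\<phi> g x0)}"
    interpret group G
      using group_hom by (simp add: group_hom_def)
    define x where "x = \<phi> (inv g) y"
    have x: "x \<in> E"
      using element_image[OF inv_closed[OF g] _ x_def[symmetric]] y by blast
    have "\<phi> g x = y"
      using orbit_sym_aux[OF inv_closed[OF g] y[THEN CollectD, THEN conjunct1]]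
      by (simp add: x_def g)
    moreover have "f x = f x0"
      using fibres_respected[OF inv_closed[OF g] _ element_image[OF g x0 refl]] y
        orbit_sym_aux[OF g x0 refl]
      by (simp add: x_def)
    ultimately show "y \<in> \<phi> g ` {x \<in> E. f x = f x0}"
      using x by blast
  qed
qed

lemma translates_of_fibre_eq_or_disjnt:
  assumes "g \<in> carrier G" and "h \<in> carrier G"
  shows "\<phi> g ` {x \<in> E. f x = q} = \<phi> h ` {x \<in> E. f x = q} \<or>
    disjnt (\<phi> g ` {x \<in> E. f x = q}) (\<phi> h ` {x \<in> E. f x = q})"
proof (cases "\<exists>x0 \<in> E. f x0 = q")
  case True
  then obtain x0 where "x0 \<in> E" "q = f x0" by blast
  then show ?thesis
    using image_fibre[OF assms(1)] image_fibre[OF assms(2)] by (auto simp: disjnt_def)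
qed (auto simp: disjnt_def)

lemma card_Union_orbit_fibre:
  fixes q :: 'c
  assumes finG: "finite (carrier G)" and finE: "finite E"
  defines "P \<equiv> {x \<in> E. f x = q}" and "\<psi> \<equiv> induced_set_action \<phi> E"
  shows "card (\<Union>(orbit G \<psi> P)) = card P * (order G div card (stabilizer G \<psi> P))"
proof -
  interpret \<psi>: group_action G "Pow E" \<psi>
    unfolding \<psi>_def by (rule group_action_induced_set_action)
  have P: "P \<in> Pow E"
    by (auto simp: P_def)
  have orbit: "orbit G \<psi> P = {\<phi> g ` P | g. g \<in> carrier G}"
    using P by (simp add: \<psi>_def orbit_induced_set_action)
  have "card (stabilizer G \<psi> P) > 0"
    using \<psi>.stabilizer_one_closed[OF P] \<psi>.stabilizer_subset finG
    by (metis card_gt_0_iff empty_iff infinite_super)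
  then have index: "card (orbit G \<psi> P) = order G div card (stabilizer G \<psi> P)"
    using \<psi>.orbit_stabilizer_theorem[OF P] by (metis nonzero_mult_div_cancel_right less_not_refl2)
  have "pairwise disjnt (orbit G \<psi> P)"
  proof (rule pairwiseI)
    fix Q Q' assume "Q \<in> orbit G \<psi> P" "Q' \<in> orbit G \<psi> P" "Q \<noteq> Q'"
    then obtain g h where "g \<in> carrier G" "h \<in> carrier G" "Q = \<phi> g ` P" "Q' = \<phi> h ` P"
      by (auto simp: orbit)
    then show "disjnt Q Q'"
      using translates_of_fibre_eq_or_disjnt[of g h q] \<open>Q \<noteq> Q'\<close> by (auto simp: P_def)
  qed
  moreover have "finite Q" if "Q \<in> orbit G \<psi> P" for Q
    using that finE P by (auto simp: orbit intro: finite_subset)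
  ultimately have "card (\<Union>(orbit G \<psi> P)) = sum card (orbit G \<psi> P)"
    by (rule card_Union_disjoint)
  also have "\<dots> = (\<Sum>Q\<in>orbit G \<psi> P. card P)"
  proof (rule sum.cong[OF refl])
    fix Q assume "Q \<in> orbit G \<psi> P"
    then obtain g where "g \<in> carrier G" "Q = \<phi> g ` P"
      by (auto simp: orbit)
    then show "card Q = card P"
      using inj_prop P by (metis PowD card_image inj_on_subset)
  qed
  finally show ?thesis
    by (simp add: index mult.commute)
qed

lemma card_eq_sum_card_fibre_mult_index:
  assumes finG: "finite (carrier G)" and finE: "finite E" and finI: "finite I"
    and fibres: "\<forall>i\<in>I. P i = {x \<in> E. f x = p i}"
    and R: "R = (\<Union>i\<in>I. P i)"
    and disjoint: "\<forall>i\<in>I. \<forall>j\<in>I. i \<noteq> j \<longrightarrow> P i \<inter> P j = {}"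
    and covers: "\<forall>x\<in>E. \<exists>y\<in>R. y \<in> orbit G \<phi> x"
    and same_value: "\<forall>x\<in>R. \<forall>y\<in>R. y \<in> orbit G \<phi> x \<longrightarrow> f x = f y"
  shows "card E =
    (\<Sum>i\<in>I. card (P i) * (order G div card (stabilizer G (induced_set_action \<phi> E) (P i))))"
proof -
  define S where "S i = \<Union>(orbit G (induced_set_action \<phi> E) (P i))" for i
  have PE: "P i \<subseteq> E" if "i \<in> I" for i
    using fibres that by blast
  then have S: "S i = (\<Union>g\<in>carrier G. \<phi> g ` P i)" if "i \<in> I" for i
    using that by (auto simp: S_def orbit_induced_set_action)
  have E: "E = (\<Union>i\<in>I. S i)"
    using eq_Union_translates[OF PE] covers R S by simp
  have "S i \<inter> S j = {}" if ij: "i \<in> I" "j \<in> I" "i \<noteq> j" for i j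
  proof -
    have "y \<notin> orbit G \<phi> x" if "x \<in> P i" "y \<in> P j" for x y
    proof
      assume "y \<in> orbit G \<phi> x"
      then have "f x = f y"
        using same_value that ij R by blast
      then have "y \<in> P i"
        using that ij fibres by auto
      then show False
        using disjoint ij \<open>y \<in> P j\<close> by blast
    qed
    then show ?thesis
      using disjoint_Union_translates[OF PE PE] ij S by simp
  qed
  moreover have "finite (S i)" if "i \<in> I" for i
    using E that finE by (metis UN_upper finite_subset)
  ultimately have "card E = (\<Sum>i\<in>I. card (S i))"
    unfolding E using finI by (intro card_UN_disjoint) auto
  also have "\<dots> = (\<Sum>i\<in>I. card (P i) * (order G div card (stabilizer G (induced_set_action \<phi> E) (P i))))"
    using card_Union_orbit_fibre[OF finG finE] fibres by (simp add: S_def)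
  finally show ?thesis .
qed

end

definition reflect :: "bool \<Rightarrow> nat \<Rightarrow> nat \<Rightarrow> nat" where
  "reflect a k x = (if a then k - 1 - x else x)"

lemma reflect_less: "x < k \<Longrightarrow> reflect a k x < k"
  by (simp add: reflect_def)

lemma reflect_reflect: "x < k \<Longrightarrow> reflect a k (reflect b k x) = reflect (a \<noteq> b) k x"
  by (simp add: reflect_def)

lemma reflect_trivial: "k \<le> 1 \<Longrightarrow> x < k \<Longrightarrow> reflect a k x = x"
  by (simp add: reflect_def)

definition grid_sym :: "nat \<Rightarrow> nat \<Rightarrow> bool \<times> bool \<times> bool \<Rightarrow> cell \<Rightarrow> cell" where
  "grid_sym m n = (\<lambda>(s, a, b). on_grid m n
     (\<lambda>(i, j). (reflect a m (if s then j else i), reflect b n (if s then i else j))))"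

lemma grid_sym_in_cells:
  "(s \<longrightarrow> m = n) \<Longrightarrow> c \<in> cells m n \<Longrightarrow> grid_sym m n (s, a, b) c \<in> cells m n"
  by (auto simp: grid_sym_def on_grid_def cells_def reflect_less)

(* Transposing first turns a row reflection into a column reflection, hence the crossed flags. *)
lemma grid_sym_comp:
  assumes "s \<or> s' \<longrightarrow> m = n"
  shows "grid_sym m n (s, a, b) \<circ> grid_sym m n (s', a', b') =
    grid_sym m n (s \<noteq> s', if s then a \<noteq> b' else a \<noteq> a', if s then b \<noteq> a' else b \<noteq> b')"
proof
  fix c :: cell
  show "(grid_sym m n (s, a, b) \<circ> grid_sym m n (s', a', b')) c =
    grid_sym m n (s \<noteq> s', if s then a \<noteq> b' else a \<noteq> a', if s then b \<noteq> a' else b \<noteq> b') c"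
    using assms grid_sym_in_cells[of s' m n c a' b']
    by (cases c) (auto simp: grid_sym_def on_grid_def cells_def reflect_reflect)
qed

lemma grid_sym_id: "grid_sym m n (False, False, False) = id"
  by (auto simp: grid_sym_def on_grid_def reflect_def)

lemma symmetries_as_grid_sym:
  "symR0 m n = grid_sym m n (False, False, False)"
  "symH m n = grid_sym m n (False, True, False)"
  "symV m n = grid_sym m n (False, False, True)"
  "symR180 m n = grid_sym m n (False, True, True)"
  "symR90 n n = grid_sym n n (True, False, True)"
  "symR270 n n = grid_sym n n (True, True, False)"
  "symD n n = grid_sym n n (True, False, False)"
  "symD' n n = grid_sym n n (True, True, True)"
  by (simp_all add: symR0_def symH_def symV_def symR180_def symR90_def symR270_def symD_def
      symD'_def grid_sym_def reflect_def)

lemma grid_sym_single_row: "m \<le> 1 \<Longrightarrow> grid_sym m n (False, True, b) = grid_sym m n (False, False, b)"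
  by (auto simp: grid_sym_def on_grid_def cells_def reflect_trivial)

lemma grid_sym_single_column: "n \<le> 1 \<Longrightarrow> grid_sym m n (False, a, True) = grid_sym m n (False, a, False)"
  by (auto simp: grid_sym_def on_grid_def cells_def reflect_trivial)

(* With a single row or column, H and V coincide with R0 and R180, so the last case
   {R0, R180} of symgroup is again the image of the four parameters with s = False. *)
lemma symgroup_eq: "symgroup m n = grid_sym m n ` {(s, a, b). s \<longrightarrow> m = n \<and> 1 < m}"
proof (cases "m = n \<and> 1 < m")
  case True
  then have "{(s, a, b). s \<longrightarrow> m = n \<and> 1 < m} =
    {(False, False, False), (True, False, True), (False, True, True), (True, True, False),
     (False, True, False), (False, False, True), (True, False, False), (True, True, True)}"
    by auto
  then show ?thesis
    using True by (simp add: symgroup_def symmetries_as_grid_sym)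
next
  case False
  then have params: "{(s, a, b). s \<longrightarrow> m = n \<and> 1 < m} =
    {(False, False, False), (False, True, False), (False, False, True), (False, True, True)}"
    by auto
  show ?thesis
  proof (cases "1 < m \<and> 1 < n")
    case True
    then show ?thesis
      unfolding params using False by (simp add: symgroup_def symmetries_as_grid_sym)
  next
    case False
    then have "m \<le> 1 \<or> n \<le> 1"
      by auto
    then show ?thesis
      unfolding params using \<open>\<not> (m = n \<and> 1 < m)\<close> False
      by (elim disjE) (auto simp: symgroup_def symmetries_as_grid_sym grid_sym_single_row
          grid_sym_single_column)
  qed
qed

lemma mem_symgroup_iff:
  "g \<in> symgroup m n \<longleftrightarrow> (\<exists>s a b. (s \<longrightarrow> m = n \<and> 1 < m) \<and> g = grid_sym m n (s, a, b))"
  unfolding symgroup_eq image_iff by fast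

lemma group_symgroup: "group (comp_monoid (symgroup m n))"
proof (rule group_comp_monoidI)
  show "id \<in> symgroup m n"
    unfolding symgroup_eq by (rule image_eqI[where x = "(False, False, False)"]) (simp_all add: grid_sym_id)
  show "g \<circ> h \<in> symgroup m n" if members: "g \<in> symgroup m n" "h \<in> symgroup m n" for g h
  proof -
    obtain s a b where g: "s \<longrightarrow> m = n \<and> 1 < m" "g = grid_sym m n (s, a, b)"
      using members(1) mem_symgroup_iff by blast
    obtain s' a' b' where h: "s' \<longrightarrow> m = n \<and> 1 < m" "h = grid_sym m n (s', a', b')"
      using members(2) mem_symgroup_iff by blast
    have "g \<circ> h =
        grid_sym m n (s \<noteq> s', if s then a \<noteq> b' else a \<noteq> a', if s then b \<noteq> a' else b \<noteq> b')"
      using g h by (simp add: grid_sym_comp)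
    then show ?thesis
      unfolding symgroup_eq by (rule image_eqI) (use g h in auto)
  qed
  show "\<exists>h\<in>symgroup m n. h \<circ> g = id" if member: "g \<in> symgroup m n" for g
  proof -
    obtain s a b where "s \<longrightarrow> m = n \<and> 1 < m" "g = grid_sym m n (s, a, b)"
      using member mem_symgroup_iff by blast
    then show ?thesis
      by (intro bexI[of _ "grid_sym m n (s, if s then b else a, if s then a else b)"])
        (auto simp: symgroup_eq grid_sym_comp grid_sym_id)
  qed
qed

lemma symgroup_in_cells: "g \<in> symgroup m n \<Longrightarrow> c \<in> cells m n \<Longrightarrow> g c \<in> cells m n"
  by (auto simp: symgroup_eq grid_sym_in_cells)

lemma image_in_boards:
  assumes "g \<in> symgroup m n" and "B \<in> boards m n r"
  shows "g ` B \<in> boards m n r"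
proof -
  have "card (g ` B) = card B"
    using group_comp_monoid_inj[OF group_symgroup assms(1)] by (simp add: card_image inj_on_subset)
  moreover have "g ` B \<subseteq> cells m n"
    using assms symgroup_in_cells by (auto simp: boards_def)
  ultimately show ?thesis
    using assms(2) by (simp add: boards_def)
qed

definition board_action :: "nat \<Rightarrow> nat \<Rightarrow> nat \<Rightarrow> (cell \<Rightarrow> cell) \<Rightarrow> cell set \<Rightarrow> cell set" where
  "board_action m n r = (\<lambda>g. \<lambda>B\<in>boards m n r. g ` B)"

lemma group_action_board_action:
  "group_action (comp_monoid (symgroup m n)) (boards m n r) (board_action m n r)"
  unfolding board_action_def by (rule group_action_image_action[OF group_symgroup image_in_boards])

lemma board_partition_image:
  assumes "inj_on g C" and "B \<subseteq> C"
  shows "board_partition region (g ` B) l = card {c \<in> B. region (g c) = l}"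
proof -
  have "{c \<in> g ` B. region c = l} = g ` {c \<in> B. region (g c) = l}"
    by auto
  moreover have "inj_on g {c \<in> B. region (g c) = l}"
    using assms by (blast intro: inj_on_subset)
  ultimately show ?thesis
    by (simp add: board_partition_def card_image)
qed

lemma preimage_region_eq:
  assumes inj: "inj_on g C" and maps: "g ` C \<subseteq> C"
    and regions: "\<forall>l\<in>region ` C. \<exists>l'\<in>region ` C. g ` {c \<in> C. region c = l} = {c \<in> C. region c = l'}"
    and c0: "c0 \<in> C"
  shows "{c \<in> C. region (g c) = region (g c0)} = {c \<in> C. region c = region c0}"
proof -
  obtain l' where l': "g ` {c \<in> C. region c = region c0} = {c \<in> C. region c = l'}"
    using regions c0 by blast
  moreover have "g c0 \<in> g ` {c \<in> C. region c = region c0}"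
    using c0 by blast
  ultimately have l'_eq: "l' = region (g c0)"
    by simp
  show ?thesis
  proof (intro equalityI subsetI)
    fix c assume c: "c \<in> {c \<in> C. region (g c) = region (g c0)}"
    then have "g c \<in> g ` {c \<in> C. region c = region c0}"
      using l' l'_eq maps by blast
    then obtain c' where "c' \<in> C" "region c' = region c0" "g c = g c'"
      by blast
    then show "c \<in> {c \<in> C. region c = region c0}"
      using c inj by (auto dest: inj_onD)
  next
    fix c assume "c \<in> {c \<in> C. region c = region c0}"
    then have "g c \<in> {c \<in> C. region c = l'}"
      using l' by blast
    then show "c \<in> {c \<in> C. region (g c) = region (g c0)}"
      using \<open>c \<in> {c \<in> C. region c = region c0}\<close> l'_eq by simp
  qed
qed

lemma board_partition_image_eq:
  assumes inj: "inj_on g C" and maps: "g ` C \<subseteq> C"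
    and regions: "\<forall>l\<in>region ` C. \<exists>l'\<in>region ` C. g ` {c \<in> C. region c = l} = {c \<in> C. region c = l'}"
    and B: "B \<subseteq> C" and B': "B' \<subseteq> C"
    and eq: "board_partition region B = board_partition region B'"
  shows "board_partition region (g ` B) = board_partition region (g ` B')"
proof
  fix l
  show "board_partition region (g ` B) l = board_partition region (g ` B') l"
  proof (cases "\<exists>c0 \<in> C. region (g c0) = l")
    case True
    then obtain c0 where c0: "c0 \<in> C" "l = region (g c0)"
      by blast
    have "board_partition region (g ` A) l = board_partition region A (region c0)"
      if "A \<subseteq> C" for A
    proof -
      have "{c \<in> A. region (g c) = l} = {c \<in> A. region c = region c0}"
        using preimage_region_eq[OF inj maps regions c0(1)] that c0(2) by blast
      then show ?thesis
        using board_partition_image[OF inj that, of region l] by (simp add: board_partition_def)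
    qed
    then show ?thesis
      using eq B B' by simp
  next
    case False
    then have "{c \<in> B. region (g c) = l} = {}" "{c \<in> B'. region (g c) = l} = {}"
      using B B' by blast+
    then show ?thesis
      using board_partition_image[OF inj B, of region l] board_partition_image[OF inj B', of region l]
      by (simp only: card.empty)
  qed
qed

lemma finite_boards: "finite (boards m n r)"
proof (rule finite_subset)
  show "boards m n r \<subseteq> Pow (cells m n)"
    by (auto simp: boards_def)
  show "finite (Pow (cells m n))"
    by (simp add: cells_def)
qed

lemma finite_symgroup: "finite (symgroup m n)"
  by (simp add: symgroup_def)

lemma orbit_board_action:
  "B \<in> boards m n r \<Longrightarrow>
    B' \<in> orbit (comp_monoid (symgroup m n)) (board_action m n r) B \<longleftrightarrow> equivalent m n B B'"
  by (auto simp: orbit_def equivalent_def act_def comp_monoid_def board_action_def)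

lemma stabilizer_board_action:
  assumes "P \<subseteq> boards m n r"
  shows "stabilizer (comp_monoid (symgroup m n)) (induced_set_action (board_action m n r) (boards m n r)) P =
    set_stabilizer m n P"
proof -
  have "induced_set_action (board_action m n r) (boards m n r) g P = act g ` P" for g
  proof -
    have "board_action m n r g ` P = act g ` P"
      using assms by (intro image_cong) (auto simp: act_def board_action_def)
    then show ?thesis
      using assms by (simp only: induced_set_action_apply)
  qed
  then show ?thesis
    unfolding stabilizer_def set_stabilizer_def by (simp add: comp_monoid_def)
qed

lemma fibred_action_board_partition:
  assumes "\<forall>g\<in>symgroup m n. \<forall>l\<in>region ` cells m n. \<exists>l'\<in>region ` cells m n.
      g ` region_cells m n region l = region_cells m n region l'"
  shows "fibred_action (comp_monoid (symgroup m n)) (boards m n r) (board_action m n r)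
    (board_partition region)"
  unfolding fibred_action_def fibred_action_axioms_def
proof (intro conjI group_action_board_action allI impI)
  fix g B B' assume "g \<in> carrier (comp_monoid (symgroup m n))" and B: "B \<in> boards m n r"
    and B': "B' \<in> boards m n r" and eq: "board_partition region B = board_partition region B'"
  then have g: "g \<in> symgroup m n"
    by (simp add: comp_monoid_def)
  have "board_partition region (g ` B) = board_partition region (g ` B')"
  proof (rule board_partition_image_eq[OF _ _ _ _ _ eq])
    show "inj_on g (cells m n)"
      using group_comp_monoid_inj[OF group_symgroup g] by (rule inj_on_subset) simp
    show "g ` cells m n \<subseteq> cells m n"
      using symgroup_in_cells[OF g] by blast
    show "\<forall>l\<in>region ` cells m n. \<exists>l'\<in>region ` cells m n.
        g ` {c \<in> cells m n. region c = l} = {c \<in> cells m n. region c = l'}"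
      using assms g by (simp add: region_cells_def)
    show "B \<subseteq> cells m n" "B' \<subseteq> cells m n"
      using B B' by (simp_all add: boards_def)
  qed
  then show "board_partition region (board_action m n r g B) =
      board_partition region (board_action m n r g B')"
    using B B' by (simp add: board_action_def)
qed

theorem theorem3p1:
  fixes m n r t :: nat
    and region :: "cell \<Rightarrow> 'l"
    and p :: "nat \<Rightarrow> 'l \<Rightarrow> nat"
    and Bbar :: "cell set set"
  assumes "1 \<le> m" and "1 \<le> n" and "1 \<le> r" and "r \<le> m * n"
    and regions_preserved:
      "\<forall>g\<in>symgroup m n. \<forall>l\<in>region ` cells m n. \<exists>l'\<in>region ` cells m n.
          g ` region_cells m n region l = region_cells m n region l'"
    and union: "Bbar = (\<Union>i\<in>{1..t}. boards_with_partition m n r region (p i))"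
    and disjoint: "\<forall>i\<in>{1..t}. \<forall>j\<in>{1..t}. i \<noteq> j \<longrightarrow>
          boards_with_partition m n r region (p i) \<inter>
          boards_with_partition m n r region (p j) = {}"
    and covers: "\<forall>B\<in>boards m n r. \<exists>B'\<in>Bbar. equivalent m n B B'"
    and same_partition: "\<forall>B\<in>Bbar. \<forall>B'\<in>Bbar. equivalent m n B B' \<longrightarrow>
          board_partition region B = board_partition region B'"
  shows "card (boards m n r) =
    (\<Sum>i=1..t. card (boards_with_partition m n r region (p i)) *
       (card (symgroup m n) div
        card (set_stabilizer m n (boards_with_partition m n r region (p i)))))"
proof -
  let ?G = "comp_monoid (symgroup m n)"
  let ?P = "\<lambda>i. boards_with_partition m n r region (p i)"
  interpret fibred_action ?G "boards m n r" "board_action m n r" "board_partition region"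
    by (rule fibred_action_board_partition[OF regions_preserved])
  have "Bbar \<subseteq> boards m n r"
    using union by (auto simp: boards_with_partition_def)
  then have "card (boards m n r) = (\<Sum>i=1..t. card (?P i) *
      (order ?G div card (stabilizer ?G (induced_set_action (board_action m n r) (boards m n r)) (?P i))))"
    using covers same_partition
    by (intro card_eq_sum_card_fibre_mult_index[OF _ finite_boards _ _ union disjoint])
      (auto simp: finite_symgroup boards_with_partition_def orbit_board_action)
  moreover have "?P i \<subseteq> boards m n r" for i
    by (auto simp: boards_with_partition_def)
  ultimately show ?thesis
    by (simp add: stabilizer_board_action order_def)
qed

end
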